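(* The class of threshold graphs is degree sandwich monotone; that is, for every threshold graph $G$ and every set $F\subseteq E(G)$ such that $G-F$ is threshold, every degree-minimal edge $e$ in $F$ satisfies that $G-e$ is threshold.
   Context: A graph $G=(V,E)$ is threshold if there exist a labeling $\ell:V\to\mathbb{N}_0$ and $t\in\mathbb{N}_0$ such that $X\subseteq V$ is independent iff $\sum_{x\in X}\ell(x)\le t$. Given a graph $G$ and $F\subseteq E(G)$, an edge $e\in F$ is degree-minimal in $F$ if its endpoints can be named $u,v$ so that (i) $u$ has the smallest degree in $G$ among all vertices incident to an edge of $F$, and (ii) $v$ has the smallest degree in $G$ among all vertices $w$ with $uw\in F$. *)

theory Defs
  imports Main
begin

definition simple_graph :: "'a set \<Rightarrow> 'a set set \<Rightarrow> bool" where
  "simple_graph V E \<longleftrightarrow> finite V \<and> (\<forall>e\<in>E. e \<subseteq> V \<and> card e = 2)"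

definition independent :: "'a set set \<Rightarrow> 'a set \<Rightarrow> bool" where
  "independent E X \<longleftrightarrow> (\<forall>u\<in>X. \<forall>v\<in>X. {u, v} \<notin> E)"

definition threshold :: "'a set \<Rightarrow> 'a set set \<Rightarrow> bool" where
  "threshold V E \<longleftrightarrow> (\<exists>(l :: 'a \<Rightarrow> nat) (t :: nat).
      \<forall>X. X \<subseteq> V \<longrightarrow> (independent E X \<longleftrightarrow> sum l X \<le> t))"

definition degree :: "'a set set \<Rightarrow> 'a \<Rightarrow> nat" where
  "degree E v = card {e \<in> E. v \<in> e}"

definition degree_minimal :: "'a set set \<Rightarrow> 'a set set \<Rightarrow> 'a set \<Rightarrow> bool" where
  "degree_minimal E F e \<longleftrightarrow> e \<in> F \<and> (\<exists>u v. e = {u, v} \<and>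
      (\<forall>w. w \<in> \<Union>F \<longrightarrow> degree E u \<le> degree E w) \<and>
      (\<forall>w. {u, w} \<in> F \<longrightarrow> degree E v \<le> degree E w))"

end

(*
  By the Chvatal-Hammer characterization, a graph is threshold iff it contains no alternating
  4-cycle a b c d (edges ab, cd and non-edges bc, da): under a threshold labelling the two
  edges would outweigh the two non-edges, although both pairs have the same total weight;
  conversely such a graph has an isolated or a dominating vertex, and a labelling of the rest
  extends to it.

  Suppose G - e has an alternating 4-cycle. Since G has none, e is one of its non-edges, so
  the cycle can be written u b c v with e = uv and u as in the definition of degree-minimality.
  Since G - F has no alternating 4-cycle either, F contains ub or cv. But in a graph without
  alternating 4-cycles a vertex adjacent to b has larger degree than a vertex c not adjacent
  to b, so deg c < deg u and deg b < deg v, which contradicts the choice of u or of v.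
*)

theory Submission
  imports Defs
begin

definition threshold_labelling :: "'a set \<Rightarrow> 'a set set \<Rightarrow> ('a \<Rightarrow> nat) \<Rightarrow> nat \<Rightarrow> bool" where
  "threshold_labelling V E l t \<longleftrightarrow> (\<forall>X. X \<subseteq> V \<longrightarrow> (independent E X \<longleftrightarrow> sum l X \<le> t))"

lemma threshold_labellingD:
  "threshold_labelling V E l t \<Longrightarrow> X \<subseteq> V \<Longrightarrow> independent E X \<longleftrightarrow> sum l X \<le> t"
  unfolding threshold_labelling_def by blast

lemma threshold_iff_labelling: "threshold V E \<longleftrightarrow> (\<exists>l t. threshold_labelling V E l t)"
  unfolding threshold_def threshold_labelling_def by blast

definition alternating_4_cycle :: "'a set set \<Rightarrow> 'a \<Rightarrow> 'a \<Rightarrow> 'a \<Rightarrow> 'a \<Rightarrow> bool" where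
  "alternating_4_cycle E a b c d \<longleftrightarrow>
     distinct [a, b, c, d] \<and> {a, b} \<in> E \<and> {c, d} \<in> E \<and> {b, c} \<notin> E \<and> {d, a} \<notin> E"

definition alternating_4_cycle_free :: "'a set \<Rightarrow> 'a set set \<Rightarrow> bool" where
  "alternating_4_cycle_free V E \<longleftrightarrow>
     (\<forall>a\<in>V. \<forall>b\<in>V. \<forall>c\<in>V. \<forall>d\<in>V. \<not> alternating_4_cycle E a b c d)"

definition neighbours :: "'a set \<Rightarrow> 'a set set \<Rightarrow> 'a \<Rightarrow> 'a set" where
  "neighbours V E x = {y \<in> V. {x, y} \<in> E}"

lemma simple_graph_no_loop: "simple_graph V E \<Longrightarrow> {x} \<notin> E"
  unfolding simple_graph_def by force

lemma simple_graph_edge_vertices: "simple_graph V E \<Longrightarrow> {x, y} \<in> E \<Longrightarrow> x \<in> V \<and> y \<in> V"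
  unfolding simple_graph_def by blast

lemma alternating_4_cycle_rotate:
  "alternating_4_cycle E c d a b \<longleftrightarrow> alternating_4_cycle E a b c d"
  unfolding alternating_4_cycle_def by (auto simp: insert_commute)

lemma alternating_4_cycle_reverse:
  "alternating_4_cycle E d c b a \<longleftrightarrow> alternating_4_cycle E a b c d"
  unfolding alternating_4_cycle_def by (auto simp: insert_commute)

section \<open>Threshold graphs have no alternating 4-cycle\<close>

lemma threshold_labelling_edge_iff:
  assumes "threshold_labelling V E l t" "x \<in> V" "y \<in> V" "x \<noteq> y" "{x} \<notin> E" "{y} \<notin> E"
  shows "{x, y} \<in> E \<longleftrightarrow> t < l x + l y"
proof -
  have "independent E {x, y} \<longleftrightarrow> {x, y} \<notin> E"
    using assms(5,6) unfolding independent_def by (auto simp: insert_commute)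
  moreover have "independent E {x, y} \<longleftrightarrow> sum l {x, y} \<le> t"
    using assms(1-3) by (simp add: threshold_labellingD)
  ultimately show ?thesis
    using assms(4) by (simp add: not_le[symmetric])
qed

lemma threshold_imp_alternating_4_cycle_free:
  assumes "threshold V E" "\<And>x. {x} \<notin> E"
  shows "alternating_4_cycle_free V E"
  unfolding alternating_4_cycle_free_def
proof (intro ballI notI)
  fix a b c d assume V: "a \<in> V" "b \<in> V" "c \<in> V" "d \<in> V" and "alternating_4_cycle E a b c d"
  then have cycle: "distinct [a, b, c, d]" "{a, b} \<in> E" "{c, d} \<in> E" "{b, c} \<notin> E" "{d, a} \<notin> E"
    unfolding alternating_4_cycle_def by auto
  obtain l t where lt: "threshold_labelling V E l t"
    using assms(1) threshold_iff_labelling by blast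
  note edge_iff = threshold_labelling_edge_iff[OF lt _ _ _ assms(2) assms(2)]
  have "t < l a + l b" "t < l c + l d" "l b + l c \<le> t" "l d + l a \<le> t"
    using edge_iff[of a b] edge_iff[of c d] edge_iff[of b c] edge_iff[of d a] cycle V by auto
  then show False by linarith
qed

section \<open>Graphs without alternating 4-cycles are threshold\<close>

lemma card_neighbours_less_if_private_neighbour:
  assumes "finite V" "\<And>x. {x} \<notin> E" "alternating_4_cycle_free V E"
    and "p \<in> V" "q \<in> V" "r \<in> V" "{p, r} \<in> E" "{q, r} \<notin> E" "q \<noteq> r"
  shows "card (neighbours V E q) < card (neighbours V E p)"
proof -
  have "p \<noteq> q" "p \<noteq> r" using assms(2,7,8) by auto
  \<comment> \<open>a neighbour s of q that is not one of p would close the alternating 4-cycle p r q s\<close>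
  have "neighbours V E q - {p} \<subseteq> neighbours V E p - {q}"
  proof
    fix s assume s: "s \<in> neighbours V E q - {p}"
    then have "s \<in> V" "{q, s} \<in> E" "s \<noteq> p" "s \<noteq> q" "s \<noteq> r"
      using assms(2,8) unfolding neighbours_def by auto
    with \<open>p \<noteq> q\<close> \<open>p \<noteq> r\<close> assms(4-9) have "\<not> alternating_4_cycle E p r q s"
      using assms(3) unfolding alternating_4_cycle_free_def by blast
    with \<open>{q, s} \<in> E\<close> \<open>s \<noteq> p\<close> \<open>s \<noteq> q\<close> \<open>s \<noteq> r\<close> \<open>p \<noteq> q\<close> \<open>p \<noteq> r\<close> assms(7-9)
    have "{p, s} \<in> E"
      unfolding alternating_4_cycle_def by (auto simp: insert_commute)
    then show "s \<in> neighbours V E p - {q}"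
      using \<open>s \<in> V\<close> \<open>s \<noteq> q\<close> unfolding neighbours_def by simp
  qed
  moreover have "r \<in> neighbours V E p - {q}" "r \<notin> neighbours V E q"
    using assms(6-9) unfolding neighbours_def by auto
  ultimately have "neighbours V E q - {p} \<subset> neighbours V E p - {q}"
    by blast
  then have less: "card (neighbours V E q - {p}) < card (neighbours V E p - {q})"
    using assms(1) by (intro psubset_card_mono) (auto simp: neighbours_def)
  have fin: "finite (neighbours V E x)" for x
    using assms(1) unfolding neighbours_def by simp
  have "p \<in> neighbours V E q \<longleftrightarrow> q \<in> neighbours V E p"
    using assms(4,5) unfolding neighbours_def by (auto simp: insert_commute)
  with less fin show ?thesis
    by (cases "q \<in> neighbours V E p") (auto simp: card_Diff_singleton_if)
qed

lemma alternating_4_cycle_free_isolated_or_dominating: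
  assumes "finite V" "V \<noteq> {}" "\<And>x. {x} \<notin> E" "alternating_4_cycle_free V E"
  obtains x where "x \<in> V" "\<forall>y\<in>V. {x, y} \<notin> E"
    | x where "x \<in> V" "\<forall>y\<in>V - {x}. {x, y} \<in> E"
proof -
  define f where "f x = card (neighbours V E x)" for x
  have "Max (f ` V) \<in> f ` V"
    using assms(1,2) by simp
  then obtain x where "x \<in> V" "f x = Max (f ` V)"
    by (metis imageE)
  then have x: "x \<in> V" "\<forall>z\<in>V. f z \<le> f x"
    using assms(1) by auto
  show thesis
  proof (cases "\<forall>y\<in>V - {x}. {x, y} \<in> E")
    case True
    then show thesis using that(2) x(1) by blast
  next
    case False
    then obtain y where y: "y \<in> V" "y \<noteq> x" "{x, y} \<notin> E" by blast
    \<comment> \<open>a neighbour z of y would force f x < f z, against the maximality of x\<close>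
    have "{y, z} \<notin> E" if "z \<in> V" for z
    proof
      assume "{y, z} \<in> E"
      then have "{z, y} \<in> E"
        by (simp add: insert_commute)
      then have "f x < f z"
        unfolding f_def using card_neighbours_less_if_private_neighbour[OF assms(1,3,4) that x(1) y(1)] y(2,3) by blast
      with x(2) that show False
        using leD by blast
    qed
    then show thesis using that(1) y(1) by blast
  qed
qed

lemma sum_fun_upd_remove:
  assumes "finite X"
  shows "sum (l(x := c)) X = (if x \<in> X then c else 0) + sum l (X - {x})"
proof -
  have "sum (l(x := c)) (X - {x}) = sum l (X - {x})"
    by (rule sum.cong) auto
  with assms show ?thesis
    by (cases "x \<in> X") (simp_all add: sum.remove)
qed

lemma threshold_labelling_positive:
  assumes "finite V" "threshold_labelling V E l t"
  obtains l' t' where "\<forall>y. 1 \<le> l' y" "threshold_labelling V E l' t'"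
proof -
  define n where "n = card V"
  \<comment> \<open>scaling by n + 1 makes room for adding 1 to every label without crossing the threshold\<close>
  define l' where "l' y = (n + 1) * l y + 1" for y
  have sum_l': "sum l' X = (n + 1) * sum l X + card X" for X
    unfolding l'_def sum.distrib sum_distrib_left[symmetric] by simp
  have "threshold_labelling V E l' ((n + 1) * t + n)"
    unfolding threshold_labelling_def
  proof (intro allI impI)
    fix X assume X: "X \<subseteq> V"
    have "card X \<le> n"
      using X assms(1) card_mono unfolding n_def by blast
    moreover have "(n + 1) * sum l X \<le> (n + 1) * t" if "sum l X \<le> t"
      using that by (rule mult_le_mono2)
    moreover have "(n + 1) * (t + 1) \<le> (n + 1) * sum l X" if "\<not> sum l X \<le> t"
      using that by (intro mult_le_mono2) simp
    ultimately have "sum l X \<le> t \<longleftrightarrow> sum l' X \<le> (n + 1) * t + n"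
      unfolding sum_l' by (cases "sum l X \<le> t") (simp_all add: algebra_simps)
    then show "independent E X \<longleftrightarrow> sum l' X \<le> (n + 1) * t + n"
      using threshold_labellingD[OF assms(2) X] by simp
  qed
  moreover have "\<forall>y. 1 \<le> l' y"
    unfolding l'_def by simp
  ultimately show thesis
    using that by blast
qed

lemma threshold_labelling_insert_isolated:
  assumes "threshold_labelling V E l t" "finite V" "\<forall>y\<in>insert x V. {x, y} \<notin> E"
  shows "threshold_labelling (insert x V) E (l(x := 0)) t"
  unfolding threshold_labelling_def
proof (intro allI impI)
  fix X assume X: "X \<subseteq> insert x V"
  then have "finite X" using assms(2) finite_subset by blast
  have "{x, y} \<notin> E" "{y, x} \<notin> E" if "y \<in> X" for y
    using assms(3) X that by (metis insert_commute subsetD)+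
  then have "independent E X \<longleftrightarrow> independent E (X - {x})"
    unfolding independent_def by blast
  moreover have "X - {x} \<subseteq> V" using X by blast
  moreover have "sum (l(x := 0)) X = sum l (X - {x})"
    by (subst sum_fun_upd_remove[OF \<open>finite X\<close>]) simp
  ultimately show "independent E X \<longleftrightarrow> sum (l(x := 0)) X \<le> t"
    using threshold_labellingD[OF assms(1)] by simp
qed

lemma threshold_labelling_insert_dominating:
  assumes "threshold_labelling V E l t" "finite V" "\<forall>y\<in>V. 1 \<le> l y"
    and "{x} \<notin> E" "\<forall>y\<in>V. {x, y} \<in> E"
  shows "threshold_labelling (insert x V) E (l(x := t)) t"
  unfolding threshold_labelling_def
proof (intro allI impI)
  fix X assume X: "X \<subseteq> insert x V"
  then have "finite X" using assms(2) finite_subset by blast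
  show "independent E X \<longleftrightarrow> sum (l(x := t)) X \<le> t"
  proof (cases "x \<in> X")
    case False
    then have "X \<subseteq> V" using X by blast
    moreover have "sum (l(x := t)) X = sum l X"
      using False by (intro sum.cong) auto
    ultimately show ?thesis
      using threshold_labellingD[OF assms(1)] by simp
  next
    case True
    show ?thesis
    proof (cases "X = {x}")
      case True
      with assms(4) show ?thesis by (simp add: independent_def)
    next
      case False
      then obtain y where y: "y \<in> X" "y \<noteq> x" "y \<in> V"
        using \<open>x \<in> X\<close> X by blast
      then have "\<not> independent E X"
        using assms(5) \<open>x \<in> X\<close> unfolding independent_def by blast
      moreover have "l y \<le> sum l (X - {x})"
        using y \<open>finite X\<close> by (intro member_le_sum) auto
      moreover have "sum (l(x := t)) X = t + sum l (X - {x})"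
        by (subst sum_fun_upd_remove[OF \<open>finite X\<close>]) (simp add: \<open>x \<in> X\<close>)
      ultimately show ?thesis
        using assms(3) y(3) by fastforce
    qed
  qed
qed

lemma alternating_4_cycle_free_subset:
  "alternating_4_cycle_free V E \<Longrightarrow> W \<subseteq> V \<Longrightarrow> alternating_4_cycle_free W E"
  unfolding alternating_4_cycle_free_def by blast

lemma alternating_4_cycle_free_imp_threshold:
  assumes "finite V" "\<And>x. {x} \<notin> E" "alternating_4_cycle_free V E"
  shows "threshold V E"
  using assms(1,3)
proof (induction V rule: finite_psubset_induct)
  case (psubset V)
  show ?case
  proof (cases "V = {}")
    case True
    have "threshold_labelling {} E (\<lambda>_. 0) 0"
      by (simp add: threshold_labelling_def independent_def)
    with True show ?thesis
      unfolding threshold_iff_labelling by blast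
  next
    case False
    obtain x where "x \<in> V" and x: "(\<forall>y\<in>V. {x, y} \<notin> E) \<or> (\<forall>y\<in>V - {x}. {x, y} \<in> E)"
      using alternating_4_cycle_free_isolated_or_dominating[OF psubset.hyps(1) False assms(2) psubset.prems]
      by metis
    have "alternating_4_cycle_free (V - {x}) E"
      using psubset.prems alternating_4_cycle_free_subset by blast
    with \<open>x \<in> V\<close> have "threshold (V - {x}) E"
      using psubset.IH[of "V - {x}"] by blast
    moreover have fin: "finite (V - {x})"
      using psubset.hyps(1) by blast
    ultimately obtain l t where l_pos: "\<forall>y. 1 \<le> l y" and lt: "threshold_labelling (V - {x}) E l t"
      using threshold_labelling_positive unfolding threshold_iff_labelling by metis
    have V: "insert x (V - {x}) = V"
      using \<open>x \<in> V\<close> by blast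
    from x have "\<exists>l' t'. threshold_labelling (insert x (V - {x})) E l' t'"
    proof
      assume "\<forall>y\<in>V. {x, y} \<notin> E"
      then have "\<forall>y\<in>insert x (V - {x}). {x, y} \<notin> E"
        using \<open>x \<in> V\<close> by blast
      then have "threshold_labelling (insert x (V - {x})) E (l(x := 0)) t"
        by (rule threshold_labelling_insert_isolated[OF lt fin])
      then show ?thesis by blast
    next
      assume "\<forall>y\<in>V - {x}. {x, y} \<in> E"
      then have "threshold_labelling (insert x (V - {x})) E (l(x := t)) t"
        using l_pos by (intro threshold_labelling_insert_dominating[OF lt fin _ assms(2)]) auto
      then show ?thesis by blast
    qed
    then show ?thesis
      unfolding threshold_iff_labelling V .
  qed
qed

section \<open>Degree-minimal edges\<close>

lemma degree_eq_card_neighbours: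
  assumes "simple_graph V E"
  shows "degree E x = card (neighbours V E x)"
proof -
  have "{e \<in> E. x \<in> e} = (\<lambda>y. {x, y}) ` neighbours V E x"
  proof (intro equalityI subsetI)
    fix e assume "e \<in> {e \<in> E. x \<in> e}"
    then have e: "e \<in> E" "x \<in> e" by auto
    then obtain a b where "e = {a, b}"
      using assms unfolding simple_graph_def by (metis card_2_iff)
    with e(2) have "e = {x, if x = a then b else a}"
      by auto
    with e(1) show "e \<in> (\<lambda>y. {x, y}) ` neighbours V E x"
      using simple_graph_edge_vertices[OF assms] unfolding neighbours_def by blast
  qed (auto simp: neighbours_def)
  moreover have "inj_on (\<lambda>y. {x, y}) (neighbours V E x)"
    by (rule inj_onI) (metis doubleton_eq_iff)
  ultimately show ?thesis
    unfolding degree_def by (simp add: card_image)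
qed

lemma degree_less_if_private_neighbour:
  assumes "simple_graph V E" "alternating_4_cycle_free V E"
    and "{p, r} \<in> E" "{q, r} \<notin> E" "q \<in> V" "q \<noteq> r"
  shows "degree E q < degree E p"
proof -
  have "finite V" "p \<in> V" "r \<in> V"
    using assms(1) simple_graph_edge_vertices[OF assms(1,3)] unfolding simple_graph_def by auto
  then show ?thesis
    using card_neighbours_less_if_private_neighbour[OF \<open>finite V\<close> simple_graph_no_loop[OF assms(1)] assms(2)
        \<open>p \<in> V\<close> assms(5) \<open>r \<in> V\<close> assms(3,4,6)]
    by (simp add: degree_eq_card_neighbours[OF assms(1)])
qed

lemma alternating_4_cycle_remove_edge:
  assumes "alternating_4_cycle_free V E" "a \<in> V" "b \<in> V" "c \<in> V" "d \<in> V"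
    and "alternating_4_cycle (E - {e}) a b c d"
  shows "e = {d, a} \<or> e = {b, c}"
proof -
  have "\<not> alternating_4_cycle E a b c d"
    using assms(1-5) unfolding alternating_4_cycle_free_def by blast
  with assms(6) show ?thesis
    unfolding alternating_4_cycle_def by auto
qed

lemma alternating_4_cycle_orient:
  assumes "alternating_4_cycle E a b c d" "{u, v} = {d, a} \<or> {u, v} = {b, c}"
  obtains b' c' where "alternating_4_cycle E u b' c' v"
proof -
  consider "u = a" "v = d" | "u = d" "v = a" | "u = c" "v = b" | "u = b" "v = c"
    using assms(2) unfolding doubleton_eq_iff by blast
  then show thesis
  proof cases
    case 1
    then show thesis using that[of b c] assms(1) by simp
  next
    case 2
    then show thesis using that[of c b] assms(1) alternating_4_cycle_reverse[of E a b c d] by simp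
  next
    case 3
    then show thesis using that[of d a] assms(1) alternating_4_cycle_rotate[of E c d a b] by simp
  next
    case 4
    then show thesis
      using that[of a d] assms(1) alternating_4_cycle_rotate[of E c d a b]
        alternating_4_cycle_reverse[of E c d a b] by simp
  qed
qed

lemma degree_minimal_edge_not_alternating_chord:
  assumes "simple_graph V E" "alternating_4_cycle_free V E" "alternating_4_cycle_free V (E - F)"
    and "{u, v} \<in> F"
    and u_min: "\<forall>w. w \<in> \<Union>F \<longrightarrow> degree E u \<le> degree E w"
    and v_min: "\<forall>w. {u, w} \<in> F \<longrightarrow> degree E v \<le> degree E w"
  shows "\<not> alternating_4_cycle (E - {{u, v}}) u b c v"
proof
  assume "alternating_4_cycle (E - {{u, v}}) u b c v"
  then have cycle: "distinct [u, b, c, v]" "{u, b} \<in> E" "{c, v} \<in> E" "{b, c} \<notin> E"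
    unfolding alternating_4_cycle_def by (auto simp: doubleton_eq_iff)
  then have V: "b \<in> V" "c \<in> V"
    using simple_graph_edge_vertices[OF assms(1)] by blast+
  have "{c, b} \<notin> E" "{v, c} \<in> E"
    using cycle(3,4) by (simp_all add: insert_commute)
  have "degree E c < degree E u"
    using degree_less_if_private_neighbour[OF assms(1,2) cycle(2) \<open>{c, b} \<notin> E\<close> V(2)] cycle(1) by auto
  moreover have "degree E b < degree E v"
    using degree_less_if_private_neighbour[OF assms(1,2) \<open>{v, c} \<in> E\<close> cycle(4) V(1)] cycle(1) by auto
  moreover have "\<not> alternating_4_cycle (E - F) u b c v"
    using assms(3) V simple_graph_edge_vertices[OF assms(1)] cycle(2,3)
    unfolding alternating_4_cycle_free_def by blast
  then have "{u, b} \<in> F \<or> {c, v} \<in> F"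
    using cycle assms(4) unfolding alternating_4_cycle_def by (auto simp: insert_commute)
  ultimately show False
  proof (elim disjE)
    assume "{u, b} \<in> F"
    with v_min \<open>degree E b < degree E v\<close> show False by fastforce
  next
    assume "{c, v} \<in> F"
    then have "c \<in> \<Union>F" by blast
    with u_min \<open>degree E c < degree E u\<close> show False by fastforce
  qed
qed

theorem theorem4p5:
  fixes V :: "'a set" and E F :: "'a set set" and e :: "'a set"
  assumes "simple_graph V E"
    and "threshold V E"
    and "F \<subseteq> E"
    and "threshold V (E - F)"
    and "degree_minimal E F e"
  shows "threshold V (E - {e})"
proof -
  have no_loop: "{x} \<notin> E" "{x} \<notin> E - F" "{x} \<notin> E - {e}" for x
    using simple_graph_no_loop[OF assms(1)] by auto
  have free_E: "alternating_4_cycle_free V E" and free_E_F: "alternating_4_cycle_free V (E - F)"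
    using threshold_imp_alternating_4_cycle_free assms(2,4) no_loop by blast+
  obtain u v where e: "e = {u, v}" "e \<in> F"
    and u_min: "\<forall>w. w \<in> \<Union>F \<longrightarrow> degree E u \<le> degree E w"
    and v_min: "\<forall>w. {u, w} \<in> F \<longrightarrow> degree E v \<le> degree E w"
    using assms(5) unfolding degree_minimal_def by blast
  have "alternating_4_cycle_free V (E - {e})"
    unfolding alternating_4_cycle_free_def
  proof (intro ballI notI)
    fix a b c d assume "a \<in> V" "b \<in> V" "c \<in> V" "d \<in> V"
      and cycle: "alternating_4_cycle (E - {e}) a b c d"
    then have "{u, v} = {d, a} \<or> {u, v} = {b, c}"
      using alternating_4_cycle_remove_edge[OF free_E] e(1) by blast
    then obtain b' c' where "alternating_4_cycle (E - {e}) u b' c' v"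
      using alternating_4_cycle_orient[OF cycle] by blast
    then show False
      using degree_minimal_edge_not_alternating_chord[OF assms(1) free_E free_E_F e(2)[unfolded e(1)] u_min v_min]
        e(1) by blast
  qed
  moreover have "finite V"
    using assms(1) unfolding simple_graph_def by blast
  ultimately show ?thesis
    using alternating_4_cycle_free_imp_threshold no_loop(3) by blast
qed

end
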